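(* Let $\mathcal{P}$ be a finite poset and let $L=\mathfrak{g}(\mathcal{P})$ or $L=\mathfrak{g}_A(\mathcal{P})$. Then $b(L)=|Rel(\mathcal{P})|$.
   Context: All Lie algebras are over an algebraically closed field $\mathbf{k}$ of characteristic zero. A finite poset $(\mathcal{P},\preceq)$ has underlying set $\{1,\dots,n\}$, labeled so that $x\preceq y$ implies $x\le y$ as integers. Write $x\prec y$ if $x\preceq y$ and $x\neq y$; $Rel(\mathcal{P})$ is the set of strict relations of $\mathcal{P}$. The Lie poset algebra $\mathfrak{g}(\mathcal{P})$ is the Lie subalgebra of $\mathfrak{gl}(n,\mathbf{k})$ spanned by the matrix units $E_{i,j}$ with $i\preceq j$, with bracket $[X,Y]=XY-YX$; $\mathfrak{g}_A(\mathcal{P})$ is its subalgebra of trace-zero elements. The breadth of a Lie algebra $L$ is $b(L)=\max_{x\in L}\operatorname{rank}(\mathrm{ad}_x)$, where $\mathrm{ad}_x=[x,-]:L\to L$. *)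

theory Defs
  imports "HOL-Library.Function_Algebras" "HOL-Computational_Algebra.Polynomial"
begin

definition alg_closed :: "'a::field itself \<Rightarrow> bool" where
  "alg_closed _ \<longleftrightarrow> (\<forall>p :: 'a poly. degree p > 0 \<longrightarrow> (\<exists>x. poly p x = 0))"

definition is_labeled_poset :: "nat \<Rightarrow> (nat \<Rightarrow> nat \<Rightarrow> bool) \<Rightarrow> bool" where
  "is_labeled_poset n le \<longleftrightarrow>
     (\<forall>x y. le x y \<longrightarrow> x \<in> {1..n} \<and> y \<in> {1..n} \<and> x \<le> y) \<and>
     (\<forall>x\<in>{1..n}. le x x) \<and>
     (\<forall>x y z. le x y \<longrightarrow> le y z \<longrightarrow> le x z) \<and>
     (\<forall>x y. le x y \<longrightarrow> le y x \<longrightarrow> x = y)"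

definition Rel :: "(nat \<Rightarrow> nat \<Rightarrow> bool) \<Rightarrow> (nat \<times> nat) set" where
  "Rel le = {(x, y). le x y \<and> x \<noteq> y}"

text \<open>n x n matrices are represented as functions nat => nat => 'a (entries indexed by {1..n}).\<close>
definition mat_mult :: "nat \<Rightarrow> (nat \<Rightarrow> nat \<Rightarrow> 'a::field) \<Rightarrow> (nat \<Rightarrow> nat \<Rightarrow> 'a) \<Rightarrow> (nat \<Rightarrow> nat \<Rightarrow> 'a)" where
  "mat_mult n A B = (\<lambda>i j. \<Sum>k\<in>{1..n}. A i k * B k j)"

definition bracket :: "nat \<Rightarrow> (nat \<Rightarrow> nat \<Rightarrow> 'a::field) \<Rightarrow> (nat \<Rightarrow> nat \<Rightarrow> 'a) \<Rightarrow> (nat \<Rightarrow> nat \<Rightarrow> 'a)" where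
  "bracket n A B = (\<lambda>i j. mat_mult n A B i j - mat_mult n B A i j)"

definition mscale :: "'a::field \<Rightarrow> (nat \<Rightarrow> nat \<Rightarrow> 'a) \<Rightarrow> (nat \<Rightarrow> nat \<Rightarrow> 'a)" where
  "mscale c A = (\<lambda>i j. c * A i j)"

definition lie_poset_alg :: "nat \<Rightarrow> (nat \<Rightarrow> nat \<Rightarrow> bool) \<Rightarrow> (nat \<Rightarrow> nat \<Rightarrow> 'a::field) set" where
  "lie_poset_alg n le = {M. \<forall>i j. M i j \<noteq> 0 \<longrightarrow> le i j}"

definition lie_poset_alg_A :: "nat \<Rightarrow> (nat \<Rightarrow> nat \<Rightarrow> bool) \<Rightarrow> (nat \<Rightarrow> nat \<Rightarrow> 'a::field) set" where
  "lie_poset_alg_A n le = {M \<in> lie_poset_alg n le. (\<Sum>i\<in>{1..n}. M i i) = 0}"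

definition ad_rank :: "nat \<Rightarrow> (nat \<Rightarrow> nat \<Rightarrow> 'a::field) set \<Rightarrow> (nat \<Rightarrow> nat \<Rightarrow> 'a) \<Rightarrow> nat" where
  "ad_rank n L x = vector_space.dim mscale ((\<lambda>y. bracket n x y) ` L)"

definition breadth :: "nat \<Rightarrow> (nat \<Rightarrow> nat \<Rightarrow> 'a::field) set \<Rightarrow> nat" where
  "breadth n L = Max (ad_rank n L ` L)"

end

theory Submission imports Defs begin

text \<open>The matrix units \<open>E\<^sub>i\<^sub>j\<close> with \<open>(i, j) \<in> Rel(P)\<close> are linearly independent, and every
  bracket of two elements of \<open>g(P)\<close> lies in their span, so \<open>rank ad\<^sub>x \<le> |Rel(P)|\<close>.
  Conversely, for a diagonal matrix \<open>D\<close> with pairwise distinct entries \<open>d\<^sub>i\<close> one has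
  \<open>[D, E\<^sub>i\<^sub>j] = (d\<^sub>i - d\<^sub>j) E\<^sub>i\<^sub>j\<close>, so the image of \<open>ad\<^sub>D\<close> contains all these units.
  In characteristic zero the entries can be chosen to sum to zero, so \<open>D\<close> lies in
  \<open>g\<^sub>A(P)\<close> as well.\<close>

interpretation mat: vector_space "mscale :: 'a::field \<Rightarrow> (nat \<Rightarrow> nat \<Rightarrow> 'a) \<Rightarrow> _"
  by unfold_locales (auto simp: mscale_def fun_eq_iff algebra_simps)

lemma labeled_poset_leD:
  "is_labeled_poset n le \<Longrightarrow> le x y \<Longrightarrow> x \<in> {1..n} \<and> y \<in> {1..n} \<and> x \<le> y"
  unfolding is_labeled_poset_def by blast

lemma labeled_poset_refl: "is_labeled_poset n le \<Longrightarrow> x \<in> {1..n} \<Longrightarrow> le x x"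
  unfolding is_labeled_poset_def by blast

lemma labeled_poset_trans: "is_labeled_poset n le \<Longrightarrow> le x y \<Longrightarrow> le y z \<Longrightarrow> le x z"
  unfolding is_labeled_poset_def by blast

lemma labeled_poset_antisym: "is_labeled_poset n le \<Longrightarrow> le x y \<Longrightarrow> le y x \<Longrightarrow> x = y"
  unfolding is_labeled_poset_def by blast

lemma finite_Rel: "is_labeled_poset n le \<Longrightarrow> finite (Rel le)"
  by (rule finite_subset[of _ "{1..n} \<times> {1..n}"]) (auto simp: Rel_def dest: labeled_poset_leD)

definition matrix_unit :: "nat \<times> nat \<Rightarrow> nat \<Rightarrow> nat \<Rightarrow> 'a::field" where
  "matrix_unit p = (\<lambda>a b. if (a, b) = p then 1 else 0)"

lemma sum_apply2: "(\<Sum>p\<in>A. f p) a b = (\<Sum>p\<in>A. f p a b)"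
  by (induction A rule: infinite_finite_induct) auto

lemma inj_matrix_unit: "inj (matrix_unit :: _ \<Rightarrow> nat \<Rightarrow> nat \<Rightarrow> 'a::field)"
proof (rule injI)
  fix p q :: "nat \<times> nat"
  assume "(matrix_unit p :: nat \<Rightarrow> nat \<Rightarrow> 'a) = matrix_unit q"
  then have "(matrix_unit p :: nat \<Rightarrow> nat \<Rightarrow> 'a) (fst p) (snd p) = matrix_unit q (fst p) (snd p)"
    by simp
  then show "p = q" by (auto simp: matrix_unit_def split: if_splits)
qed

lemma card_matrix_units: "card (matrix_unit ` R :: (nat \<Rightarrow> nat \<Rightarrow> 'a::field) set) = card R"
  by (rule card_image) (rule inj_on_subset[OF inj_matrix_unit], simp)

lemma matrix_unit_expansion:
  assumes "finite R" and "\<And>a b. M a b \<noteq> 0 \<Longrightarrow> (a, b) \<in> R"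
  shows "(\<Sum>p\<in>R. mscale (M (fst p) (snd p)) (matrix_unit p)) = (M :: nat \<Rightarrow> nat \<Rightarrow> 'a::field)"
proof (intro ext)
  fix a b
  have "(\<Sum>p\<in>R. mscale (M (fst p) (snd p)) (matrix_unit p)) a b
      = (\<Sum>p\<in>R. if p = (a, b) then M a b else 0)"
    unfolding sum_apply2 by (rule sum.cong) (auto simp: mscale_def matrix_unit_def)
  also have "\<dots> = M a b" using assms by (auto simp: sum.delta')
  finally show "(\<Sum>p\<in>R. mscale (M (fst p) (snd p)) (matrix_unit p)) a b = M a b" .
qed

lemma in_span_matrix_units:
  assumes "finite R" and "\<And>a b. M a b \<noteq> 0 \<Longrightarrow> (a, b) \<in> R"
  shows "(M :: nat \<Rightarrow> nat \<Rightarrow> 'a::field) \<in> mat.span (matrix_unit ` R)"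
proof -
  have "(\<Sum>p\<in>R. mscale (M (fst p) (snd p)) (matrix_unit p)) \<in> mat.span (matrix_unit ` R)"
    by (intro mat.span_sum mat.span_scale mat.span_base) auto
  then show ?thesis using matrix_unit_expansion[where M = M, OF assms] by simp
qed

lemma independent_matrix_units:
  assumes "finite R"
  shows "mat.independent (matrix_unit ` R :: (nat \<Rightarrow> nat \<Rightarrow> 'a::field) set)"
proof
  assume "mat.dependent (matrix_unit ` R :: (nat \<Rightarrow> nat \<Rightarrow> 'a) set)"
  then obtain u where u: "\<exists>v\<in>matrix_unit ` R. u v \<noteq> 0"
    and comb: "(\<Sum>v\<in>matrix_unit ` R. mscale (u v) v) = (0 :: nat \<Rightarrow> nat \<Rightarrow> 'a)"
    using mat.dependent_finite[of "matrix_unit ` R"] assms by auto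
  obtain q where q: "q \<in> R" "u (matrix_unit q) \<noteq> 0" using u by auto
  have "(\<Sum>p\<in>R. mscale (u (matrix_unit p)) (matrix_unit p)) = (0 :: nat \<Rightarrow> nat \<Rightarrow> 'a)"
    using comb by (subst (asm) sum.reindex) (auto intro: inj_on_subset[OF inj_matrix_unit])
  then have "(\<Sum>p\<in>R. mscale (u (matrix_unit p)) (matrix_unit p)) (fst q) (snd q) = (0 :: 'a)"
    by simp
  moreover have "(\<Sum>p\<in>R. mscale (u (matrix_unit p)) (matrix_unit p)) (fst q) (snd q)
      = (\<Sum>p\<in>R. if p = q then u (matrix_unit q) else (0 :: 'a))"
    unfolding sum_apply2 by (rule sum.cong) (auto simp: mscale_def matrix_unit_def)
  ultimately show False using q assms by (simp add: sum.delta)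
qed

lemma dim_eq_card_by_matrix_units:
  assumes "finite R"
    and "V \<subseteq> mat.span (matrix_unit ` R)" and "matrix_unit ` R \<subseteq> mat.span V"
  shows "mat.dim (V :: (nat \<Rightarrow> nat \<Rightarrow> 'a::field) set) = card R"
proof -
  have "mat.dim V = mat.dim (matrix_unit ` R :: (nat \<Rightarrow> nat \<Rightarrow> 'a) set)"
    using assms(2,3) by (intro mat.span_eq_dim) (simp add: mat.span_eq)
  also have "\<dots> = card R"
    by (simp add: mat.dim_eq_card_independent[OF independent_matrix_units[OF assms(1)]]
        card_matrix_units)
  finally show ?thesis .
qed

lemma bracket_lie_poset_alg_supported_Rel:
  assumes P: "is_labeled_poset n le"
    and x: "x \<in> lie_poset_alg n le" and y: "y \<in> lie_poset_alg n le"
    and nz: "bracket n x y a b \<noteq> 0"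
  shows "(a, b) \<in> Rel le"
proof (rule ccontr)
  assume nR: "(a, b) \<notin> Rel le"
  have summand_0: "x a k * y k b - y a k * x k b = 0" for k
  proof (cases "le a k \<and> le k b")
    case True
    then have "le a b" using labeled_poset_trans[OF P] by blast
    with nR have "a = b" by (auto simp: Rel_def)
    with True have "k = a" using labeled_poset_antisym[OF P] by blast
    with \<open>a = b\<close> show ?thesis by (simp add: mult.commute)
  next
    case False
    then have "x a k = 0 \<or> y k b = 0" "y a k = 0 \<or> x k b = 0"
      using x y by (auto simp: lie_poset_alg_def)
    then show ?thesis by auto
  qed
  have "bracket n x y a b = (\<Sum>k\<in>{1..n}. x a k * y k b - y a k * x k b)"
    by (simp add: bracket_def mat_mult_def sum_subtractf)
  with summand_0 nz show False by simp
qed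

lemma ad_image_subset_span_Rel:
  assumes P: "is_labeled_poset n le"
    and L: "L \<subseteq> lie_poset_alg n le" and "x \<in> L"
  shows "(\<lambda>y. bracket n x y) ` L \<subseteq> mat.span (matrix_unit ` Rel le :: (nat \<Rightarrow> nat \<Rightarrow> 'a::field) set)"
proof
  fix M assume "M \<in> (\<lambda>y. bracket n x y) ` L"
  then obtain y where "y \<in> L" and M: "M = bracket n x y" by blast
  then have xy: "x \<in> lie_poset_alg n le" "y \<in> lie_poset_alg n le" using L \<open>x \<in> L\<close> by auto
  show "M \<in> mat.span (matrix_unit ` Rel le)"
    unfolding M
    by (rule in_span_matrix_units[OF finite_Rel[OF P]],
        rule bracket_lie_poset_alg_supported_Rel[OF P xy])
qed

lemma ad_rank_le_card_Rel:
  assumes "is_labeled_poset n le" and "L \<subseteq> lie_poset_alg n le" and "x \<in> L"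
  shows "ad_rank n L (x :: nat \<Rightarrow> nat \<Rightarrow> 'a::field) \<le> card (Rel le)"
  unfolding ad_rank_def
  using mat.dim_le_card[OF ad_image_subset_span_Rel[OF assms]] finite_Rel[OF assms(1)]
  by (simp add: card_matrix_units)

definition diag :: "nat \<Rightarrow> (nat \<Rightarrow> 'a::field) \<Rightarrow> nat \<Rightarrow> nat \<Rightarrow> 'a" where
  "diag n d = (\<lambda>a b. if a = b \<and> a \<in> {1..n} then d a else 0)"

lemma mat_mult_diag_matrix_unit:
  assumes "i \<in> {1..n}"
  shows "mat_mult n (diag n d) (matrix_unit (i, j)) = mscale (d i) (matrix_unit (i, j))"
proof (intro ext)
  fix a b
  have "mat_mult n (diag n d) (matrix_unit (i, j)) a b
      = (\<Sum>k\<in>{1..n}. if k = i then mscale (d i) (matrix_unit (i, j)) a b else 0)"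
    unfolding mat_mult_def by (rule sum.cong) (auto simp: diag_def matrix_unit_def mscale_def)
  then show "mat_mult n (diag n d) (matrix_unit (i, j)) a b = mscale (d i) (matrix_unit (i, j)) a b"
    using assms by simp
qed

lemma mat_mult_matrix_unit_diag:
  assumes "j \<in> {1..n}"
  shows "mat_mult n (matrix_unit (i, j)) (diag n d) = mscale (d j) (matrix_unit (i, j))"
proof (intro ext)
  fix a b
  have "mat_mult n (matrix_unit (i, j)) (diag n d) a b
      = (\<Sum>k\<in>{1..n}. if k = j then mscale (d j) (matrix_unit (i, j)) a b else 0)"
    unfolding mat_mult_def by (rule sum.cong) (auto simp: diag_def matrix_unit_def mscale_def)
  then show "mat_mult n (matrix_unit (i, j)) (diag n d) a b = mscale (d j) (matrix_unit (i, j)) a b"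
    using assms by simp
qed

lemma bracket_diag_matrix_unit:
  assumes "i \<in> {1..n}" "j \<in> {1..n}"
  shows "bracket n (diag n d) (matrix_unit (i, j)) = mscale (d i - d j) (matrix_unit (i, j))"
  by (simp add: bracket_def mat_mult_diag_matrix_unit[OF assms(1)]
      mat_mult_matrix_unit_diag[OF assms(2)] mscale_def fun_eq_iff algebra_simps)

lemma ad_rank_diag_eq_card_Rel:
  assumes P: "is_labeled_poset n le" and L: "L \<subseteq> lie_poset_alg n le"
    and D: "diag n d \<in> L"
    and dist: "\<And>i j. i \<in> {1..n} \<Longrightarrow> j \<in> {1..n} \<Longrightarrow> i \<noteq> j \<Longrightarrow> d i \<noteq> (d j :: 'a::field)"
    and units: "\<And>p. p \<in> Rel le \<Longrightarrow> matrix_unit p \<in> L"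
  shows "ad_rank n L (diag n d) = card (Rel le)"
  unfolding ad_rank_def
proof (rule dim_eq_card_by_matrix_units[OF finite_Rel[OF P] ad_image_subset_span_Rel[OF P L D]],
    rule subsetI)
  fix M :: "nat \<Rightarrow> nat \<Rightarrow> 'a"
  assume "M \<in> matrix_unit ` Rel le"
  then obtain i j where ij: "(i, j) \<in> Rel le" and M: "M = matrix_unit (i, j)" by auto
  then have ijn: "i \<in> {1..n}" "j \<in> {1..n}" and "i \<noteq> j"
    using labeled_poset_leD[OF P] by (auto simp: Rel_def)
  have "bracket n (diag n d) M \<in> (\<lambda>y. bracket n (diag n d) y) ` L"
    using units[OF ij] M by blast
  then have "mscale (inverse (d i - d j)) (bracket n (diag n d) M)
      \<in> mat.span ((\<lambda>y. bracket n (diag n d) y) ` L)"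
    by (intro mat.span_scale mat.span_base)
  moreover have "mscale (inverse (d i - d j)) (bracket n (diag n d) M) = M"
    using dist[OF ijn \<open>i \<noteq> j\<close>]
    by (simp add: M bracket_diag_matrix_unit[OF ijn] mscale_def fun_eq_iff)
  ultimately show "M \<in> mat.span ((\<lambda>y. bracket n (diag n d) y) ` L)" by simp
qed

lemma breadth_eq_card_Rel:
  assumes P: "is_labeled_poset n le" and L: "L \<subseteq> lie_poset_alg n le"
    and D: "diag n d \<in> L"
    and "\<And>i j. i \<in> {1..n} \<Longrightarrow> j \<in> {1..n} \<Longrightarrow> i \<noteq> j \<Longrightarrow> d i \<noteq> (d j :: 'a::field)"
    and "\<And>p. p \<in> Rel le \<Longrightarrow> matrix_unit p \<in> L"
  shows "breadth n L = card (Rel le)"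
proof -
  have le: "ad_rank n L x \<le> card (Rel le)" if "x \<in> L" for x
    using ad_rank_le_card_Rel[OF P L that] .
  have "finite (ad_rank n L ` L)"
    by (rule finite_subset[of _ "{..card (Rel le)}"]) (auto dest: le)
  then show ?thesis
    unfolding breadth_def
    using ad_rank_diag_eq_card_Rel[OF assms] D le by (intro Max_eqI) force+
qed

definition centered_diag :: "nat \<Rightarrow> nat \<Rightarrow> 'a::field_char_0" where
  "centered_diag n i = of_nat (n * i) - of_nat (\<Sum>k\<in>{1..n}. k)"

lemma centered_diag_inj:
  assumes "i \<in> {1..n}" "j \<in> {1..n}" "i \<noteq> j"
  shows "centered_diag n i \<noteq> centered_diag n j"
proof
  assume "centered_diag n i = centered_diag n j"
  then have "(of_nat (n * i) :: 'a) = of_nat (n * j)" by (simp add: centered_diag_def)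
  then have "n * i = n * j" by (simp only: of_nat_eq_iff)
  with assms show False by auto
qed

lemma sum_centered_diag: "(\<Sum>i\<in>{1..n}. centered_diag n i :: 'a::field_char_0) = 0"
proof -
  have "(\<Sum>i\<in>{1..n}. centered_diag n i :: 'a)
      = of_nat n * (\<Sum>i\<in>{1..n}. of_nat i) - of_nat n * of_nat (\<Sum>k\<in>{1..n}. k)"
    by (simp add: centered_diag_def sum_subtractf sum_distrib_left)
  then show ?thesis by simp
qed

lemma diag_in_lie_poset_alg_A:
  assumes "is_labeled_poset n le" and "(\<Sum>i\<in>{1..n}. d i) = 0"
  shows "diag n d \<in> lie_poset_alg_A n le"
  using assms labeled_poset_refl[OF assms(1)]
  by (auto simp: lie_poset_alg_A_def lie_poset_alg_def diag_def)

lemma matrix_unit_Rel_in_lie_poset_alg_A: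
  assumes "p \<in> Rel le"
  shows "(matrix_unit p :: nat \<Rightarrow> nat \<Rightarrow> 'a::field) \<in> lie_poset_alg_A n le"
proof -
  have "(\<Sum>k\<in>{1..n}. (matrix_unit p :: nat \<Rightarrow> nat \<Rightarrow> 'a) k k) = 0"
    using assms by (intro sum.neutral) (auto simp: matrix_unit_def Rel_def)
  then show ?thesis
    using assms by (auto simp: lie_poset_alg_A_def lie_poset_alg_def matrix_unit_def Rel_def)
qed

theorem theorem1:
  fixes n :: nat and le :: "nat \<Rightarrow> nat \<Rightarrow> bool"
  assumes "alg_closed TYPE('a::field_char_0)"
    and "is_labeled_poset n le"
  shows "breadth n (lie_poset_alg n le :: (nat \<Rightarrow> nat \<Rightarrow> 'a) set) = card (Rel le) \<and>
         breadth n (lie_poset_alg_A n le :: (nat \<Rightarrow> nat \<Rightarrow> 'a) set) = card (Rel le)"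
proof -
  note P = assms(2)
  have A_sub: "lie_poset_alg_A n le \<subseteq> (lie_poset_alg n le :: (nat \<Rightarrow> nat \<Rightarrow> 'a) set)"
    by (auto simp: lie_poset_alg_A_def)
  have D: "diag n (centered_diag n) \<in> (lie_poset_alg_A n le :: (nat \<Rightarrow> nat \<Rightarrow> 'a) set)"
    by (rule diag_in_lie_poset_alg_A[OF P sum_centered_diag])
  note units = matrix_unit_Rel_in_lie_poset_alg_A
  show ?thesis
  proof
    show "breadth n (lie_poset_alg n le :: (nat \<Rightarrow> nat \<Rightarrow> 'a) set) = card (Rel le)"
      using D A_sub units
      by (intro breadth_eq_card_Rel[where d = "centered_diag n", OF P order.refl _ centered_diag_inj])
        blast+
    show "breadth n (lie_poset_alg_A n le :: (nat \<Rightarrow> nat \<Rightarrow> 'a) set) = card (Rel le)"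
      using units by (intro breadth_eq_card_Rel[where d = "centered_diag n", OF P A_sub D centered_diag_inj])
  qed
qed

end
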